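(* For $m=2,4,6$ let $\mathbb Z_m\subset SL_2(\mathbb Z)$ be the cyclic subgroup generated respectively by $\begin{pmatrix}-1&0\\0&-1\end{pmatrix}$, $\begin{pmatrix}0&-1\\1&0\end{pmatrix}$, $\begin{pmatrix}0&1\\-1&1\end{pmatrix}$, and let $G_m=\mathbb Z_m\ltimes\mathbb Z^2\subset\Gamma^J$ be the subgroup of pairs $(M,X)$ with $M\in\mathbb Z_m$, $X\in\mathbb Z^2$. Then $G_2\subset G_4$ and $G_2\subset G_6$, and the Jacobi group $\Gamma^J$ is isomorphic to the amalgamated free product $G_4 *_{G_2} G_6$.
   Context: The full Jacobi group is $\Gamma^J=SL_2(\mathbb Z)\ltimes\mathbb Z^2$, the set of pairs $(M,X)$ with $M\in SL_2(\mathbb Z)$, $X\in\mathbb Z^2$ a row vector, with multiplication $(M,X)(M',X')=(MM',XM'+X')$. *)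

theory Defs
  imports "HOL-Analysis.Analysis" "HOL-Algebra.Algebra"
begin

definition mat2 :: "int \<Rightarrow> int \<Rightarrow> int \<Rightarrow> int \<Rightarrow> int^2^2" where
  "mat2 a b c d = (\<chi> i j. if i = 1 then (if j = 1 then a else b) else (if j = 1 then c else d))"

definition SL2 :: "(int^2^2) monoid" where
  "SL2 = \<lparr>carrier = {M. det M = 1}, mult = (\<lambda>M N. matrix_matrix_mult M N), one = mat 1\<rparr>"

text \<open>The full Jacobi group: pairs (M,X), X a row vector, (M,X)(M',X') = (MM', XM'+X').\<close>
definition Jacobi :: "((int^2^2) \<times> (int^2)) monoid" where
  "Jacobi = \<lparr>carrier = {P. det (fst P) = 1},
             mult = (\<lambda>P Q. (matrix_matrix_mult (fst P) (fst Q), vector_matrix_mult (snd P) (fst Q) + snd Q)),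
             one = (mat 1, 0)\<rparr>"

definition cyc :: "int^2^2 \<Rightarrow> (int^2^2) set" where
  "cyc g = generate SL2 {g}"

definition semi :: "(int^2^2) set \<Rightarrow> ((int^2^2) \<times> (int^2)) monoid" where
  "semi Z = Jacobi\<lparr>carrier := {P. fst P \<in> Z}\<rparr>"

definition G2 where "G2 = semi (cyc (mat2 (-1) 0 0 (-1)))"
definition G4 where "G4 = semi (cyc (mat2 0 (-1) 1 0))"
definition G6 where "G6 = semi (cyc (mat2 0 1 (-1) 1))"

text \<open>Amalgamated free product G *_A H for a common subgroup A of G and H
  (all living in the same ambient type): words in letters from G (Inl) and H (Inr),
  modulo the congruence generated by multiplying adjacent letters of the same factor,
  deleting identity letters, and identifying a \<in> A in G with a \<in> A in H.\<close>

definition amalg_words :: "'a monoid \<Rightarrow> 'a monoid \<Rightarrow> ('a + 'a) list set" where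
  "amalg_words G H = {w. \<forall>l \<in> set w. (case l of Inl x \<Rightarrow> x \<in> carrier G | Inr y \<Rightarrow> y \<in> carrier H)}"

definition amalg_step :: "'a monoid \<Rightarrow> 'a monoid \<Rightarrow> 'a monoid \<Rightarrow> ('a + 'a) list rel" where
  "amalg_step A G H =
     {(u @ [Inl x, Inl y] @ v, u @ [Inl (x \<otimes>\<^bsub>G\<^esub> y)] @ v) | u v x y.
         u \<in> amalg_words G H \<and> v \<in> amalg_words G H \<and> x \<in> carrier G \<and> y \<in> carrier G}
   \<union> {(u @ [Inr x, Inr y] @ v, u @ [Inr (x \<otimes>\<^bsub>H\<^esub> y)] @ v) | u v x y.
         u \<in> amalg_words G H \<and> v \<in> amalg_words G H \<and> x \<in> carrier H \<and> y \<in> carrier H}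
   \<union> {(u @ [Inl \<one>\<^bsub>G\<^esub>] @ v, u @ v) | u v. u \<in> amalg_words G H \<and> v \<in> amalg_words G H}
   \<union> {(u @ [Inr \<one>\<^bsub>H\<^esub>] @ v, u @ v) | u v. u \<in> amalg_words G H \<and> v \<in> amalg_words G H}
   \<union> {(u @ [Inl a] @ v, u @ [Inr a] @ v) | u v a.
         u \<in> amalg_words G H \<and> v \<in> amalg_words G H \<and> a \<in> carrier A}"

definition amalg_rel :: "'a monoid \<Rightarrow> 'a monoid \<Rightarrow> 'a monoid \<Rightarrow> ('a + 'a) list rel" where
  "amalg_rel A G H = (amalg_step A G H \<union> (amalg_step A G H)\<inverse>)\<^sup>* \<inter> (amalg_words G H \<times> amalg_words G H)"

definition amalg :: "'a monoid \<Rightarrow> 'a monoid \<Rightarrow> 'a monoid \<Rightarrow> ('a + 'a) list set monoid" where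
  "amalg A G H =
     \<lparr>carrier = amalg_words G H // amalg_rel A G H,
      mult = (\<lambda>P Q. amalg_rel A G H `` {(SOME p. p \<in> P) @ (SOME q. q \<in> Q)}),
      one = amalg_rel A G H `` {[]}\<rparr>"

end

theory Submission
  imports Defs
begin

(* Words in letters from G4 and G6 evaluate into the Jacobi group, and the amalgam is isomorphic
   to it as soon as (i) G4 and G6 generate the group and (ii) every word evaluating to 1 is
   equivalent to the empty word. (i) is Euclid's algorithm on the first column of a matrix.
   For (ii), take S = ((0,-1),(1,0)) as representative of the nontrivial coset of G2 in G4 and
   U = ((0,1),(-1,1)), U^2 for those in G6: every word reduces to an alternating word in these
   representatives followed by one letter from G2, and a nonempty alternating word never
   evaluates into G2, because S U and S U^2 lie in the multiplicatively closed set of integer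
   matrices with positive diagonal and nonpositive off-diagonal entries of negative sum
   (a ping-pong argument). *)

lemma (in group) generate_singleton_eq_pows:
  fixes n :: nat
  assumes x: "x \<in> carrier G" and n: "0 < n" "x [^] n = \<one>"
  shows "generate G {x} = (\<lambda>k. x [^] k) ` {..<n}"
proof -
  have "x [^] k = x [^] nat (k mod int n)" for k :: int
  proof -
    have "ord x dvd n" using n pow_eq_id[OF x] by simp
    then have "int (ord x) dvd k mod int n - k"
      by (meson dvd_minus_mod dvd_diff_commute int_dvd_int_iff dvd_trans dvd_minus_iff)
    then show ?thesis using n by (simp add: int_pow_eq[OF x] flip: int_pow_int)
  qed
  moreover have "nat (k mod int n) < n" for k :: int
    using n by (simp add: nat_less_iff)
  ultimately show ?thesis
    unfolding generate_pow[OF x] by (force simp flip: int_pow_int)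
qed

section \<open>Amalgamated products inside an ambient group\<close>

lemma amalg_words_simps [simp]:
  "[] \<in> amalg_words G H"
  "Inl x # w \<in> amalg_words G H \<longleftrightarrow> x \<in> carrier G \<and> w \<in> amalg_words G H"
  "Inr y # w \<in> amalg_words G H \<longleftrightarrow> y \<in> carrier H \<and> w \<in> amalg_words G H"
  "u @ v \<in> amalg_words G H \<longleftrightarrow> u \<in> amalg_words G H \<and> v \<in> amalg_words G H"
  by (auto simp: amalg_words_def)

definition amalg_moves :: "'a monoid \<Rightarrow> 'a monoid \<Rightarrow> 'a monoid \<Rightarrow> ('a + 'a) list rel" where
  "amalg_moves A G H =
     {([Inl x, Inl y], [Inl (x \<otimes>\<^bsub>G\<^esub> y)]) | x y. x \<in> carrier G \<and> y \<in> carrier G}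
   \<union> {([Inr x, Inr y], [Inr (x \<otimes>\<^bsub>H\<^esub> y)]) | x y. x \<in> carrier H \<and> y \<in> carrier H}
   \<union> {([Inl \<one>\<^bsub>G\<^esub>], []), ([Inr \<one>\<^bsub>H\<^esub>], [])}
   \<union> {([Inl a], [Inr a]) | a. a \<in> carrier A}"

lemma amalg_step_eq:
  "amalg_step A G H = {(u @ l @ v, u @ r @ v) | u v l r.
     u \<in> amalg_words G H \<and> v \<in> amalg_words G H \<and> (l, r) \<in> amalg_moves A G H}"
  unfolding amalg_step_def amalg_moves_def by blast

lemma amalg_step_context:
  assumes "(x, y) \<in> amalg_step A G H" "p \<in> amalg_words G H" "q \<in> amalg_words G H"
  shows "(p @ x @ q, p @ y @ q) \<in> amalg_step A G H"
proof -
  obtain u v l r where "x = u @ l @ v" "y = u @ r @ v" "(l, r) \<in> amalg_moves A G H"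
    "u \<in> amalg_words G H" "v \<in> amalg_words G H"
    using assms(1) unfolding amalg_step_eq by blast
  then show ?thesis
    unfolding amalg_step_eq using assms(2,3)
    by (intro CollectI exI[of _ "p @ u"] exI[of _ "v @ q"] exI[of _ l] exI[of _ r]) simp
qed

lemma amalg_rel_subset: "amalg_rel A G H \<subseteq> amalg_words G H \<times> amalg_words G H"
  unfolding amalg_rel_def by blast

lemma equiv_amalg_rel: "equiv (amalg_words G H) (amalg_rel A G H)"
proof (rule equivI)
  let ?S = "amalg_step A G H \<union> (amalg_step A G H)\<inverse>"
  show "amalg_rel A G H \<subseteq> amalg_words G H \<times> amalg_words G H"
    by (rule amalg_rel_subset)
  show "refl_on (amalg_words G H) (amalg_rel A G H)"
    by (auto simp: refl_on_def amalg_rel_def)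
  show "sym (amalg_rel A G H)"
    using sym_rtrancl[OF sym_Un_converse[of "amalg_step A G H"]]
    by (auto simp: amalg_rel_def sym_def)
  show "trans (amalg_rel A G H)"
    using trans_rtrancl[of ?S] by (auto simp: amalg_rel_def trans_def)
qed

lemma amalg_move_in_rel:
  assumes "(l, r) \<in> amalg_moves A G H" "l \<in> amalg_words G H" "r \<in> amalg_words G H"
    "p \<in> amalg_words G H" "q \<in> amalg_words G H"
  shows "(p @ l @ q, p @ r @ q) \<in> amalg_rel A G H"
proof -
  have "(p @ l @ q, p @ r @ q) \<in> amalg_step A G H"
    unfolding amalg_step_eq using assms by blast
  then show ?thesis
    using assms by (auto simp: amalg_rel_def)
qed

lemma amalg_rel_context:
  assumes "(x, y) \<in> amalg_rel A G H" "p \<in> amalg_words G H" "q \<in> amalg_words G H"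
  shows "(p @ x @ q, p @ y @ q) \<in> amalg_rel A G H"
proof -
  let ?S = "amalg_step A G H \<union> (amalg_step A G H)\<inverse>"
  have "(x, y) \<in> ?S\<^sup>*"
    using assms(1) by (simp add: amalg_rel_def)
  then have "(p @ x @ q, p @ y @ q) \<in> ?S\<^sup>*"
  proof (induction rule: rtrancl_induct)
    case (step y z)
    then have "(p @ y @ q, p @ z @ q) \<in> ?S"
      using amalg_step_context[OF _ assms(2,3)] by blast
    with step.IH show ?case by (rule rtrancl_into_rtrancl)
  qed simp
  then show ?thesis
    using assms amalg_rel_subset by (auto simp: amalg_rel_def)
qed

primrec word_eval :: "('a, 'b) monoid_scheme \<Rightarrow> ('a + 'a) list \<Rightarrow> 'a" where
  "word_eval J [] = \<one>\<^bsub>J\<^esub>"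
| "word_eval J (l # w) = case_sum id id l \<otimes>\<^bsub>J\<^esub> word_eval J w"

(* Tagging a letter by its side (True for the first factor) lets one argument handle both factors. *)
definition letter :: "bool \<Rightarrow> 'a \<Rightarrow> 'a + 'a" where
  "letter s x = (if s then Inl x else Inr x)"

lemma letter_simps [simp]:
  "letter True x = Inl x" "letter False x = Inr x" "isl (letter s x) = s" "case_sum id id (letter s x) = x"
  by (simp_all add: letter_def)

locale amalgam_in_group = group J for J :: "'a monoid" (structure) +
  fixes KA KG KH :: "'a set"
  assumes subgroup_A: "subgroup KA J" and subgroup_G: "subgroup KG J" and subgroup_H: "subgroup KH J"
    and A_subset_G: "KA \<subseteq> KG" and A_subset_H: "KA \<subseteq> KH"
begin

lemmas [simp] = subgroup.mem_carrier[OF subgroup_G] subgroup.mem_carrier[OF subgroup_H]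

abbreviation "A \<equiv> J\<lparr>carrier := KA\<rparr>"
abbreviation "G \<equiv> J\<lparr>carrier := KG\<rparr>"
abbreviation "H \<equiv> J\<lparr>carrier := KH\<rparr>"
abbreviation "words \<equiv> amalg_words G H"
abbreviation "rel \<equiv> amalg_rel A G H"

definition factor :: "bool \<Rightarrow> 'a set" where
  "factor s = (if s then KG else KH)"

lemma subgroup_factor: "subgroup (factor s) J"
  using subgroup_G subgroup_H by (simp add: factor_def)

lemma A_subset_factor: "KA \<subseteq> factor s"
  using A_subset_G A_subset_H by (simp add: factor_def)

lemma letter_Cons_words [simp]: "letter s x # w \<in> words \<longleftrightarrow> x \<in> factor s \<and> w \<in> words"
  by (cases s) (simp_all add: factor_def)

lemma Cons_wordsD: "l # w \<in> words \<Longrightarrow> case_sum id id l \<in> carrier J \<and> w \<in> words"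
  by (cases l) auto

lemma word_eval_closed: "w \<in> words \<Longrightarrow> word_eval J w \<in> carrier J"
  by (induction w) (auto dest: Cons_wordsD)

lemma word_eval_append:
  "u \<in> words \<Longrightarrow> v \<in> words \<Longrightarrow> word_eval J (u @ v) = word_eval J u \<otimes> word_eval J v"
proof (induction u)
  case (Cons l u)
  then show ?case
    using Cons_wordsD[of l u] word_eval_closed by (simp add: m_assoc)
qed (simp add: word_eval_closed)

lemma amalg_moves_words_word_eval:
  assumes "(l, r) \<in> amalg_moves A G H"
  shows "l \<in> words" "r \<in> words" "word_eval J l = word_eval J r"
  using assms A_subset_G A_subset_H subgroup_G subgroup_H
  by (auto simp: amalg_moves_def m_assoc subgroup.m_closed subgroup.one_closed)

lemma word_eval_eq_if_rel: "(x, y) \<in> rel \<Longrightarrow> word_eval J x = word_eval J y"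
proof -
  have step: "word_eval J x = word_eval J y" if "(x, y) \<in> amalg_step A G H" for x y
    using that amalg_moves_words_word_eval unfolding amalg_step_eq by (auto simp: word_eval_append)
  assume "(x, y) \<in> rel"
  then have "(x, y) \<in> (amalg_step A G H \<union> (amalg_step A G H)\<inverse>)\<^sup>*"
    by (simp add: amalg_rel_def)
  then show ?thesis
    by (induction rule: rtrancl_induct) (auto dest: step)
qed

lemma rel_sym: "(x, y) \<in> rel \<Longrightarrow> (y, x) \<in> rel"
  using equiv_amalg_rel[of G H A] by (auto elim: equivE symE)

lemma rel_trans [trans]: "(x, y) \<in> rel \<Longrightarrow> (y, z) \<in> rel \<Longrightarrow> (x, z) \<in> rel"
  using equiv_amalg_rel[of G H A] by (auto elim: equivE transE)

lemma rel_merge: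
  assumes "x \<in> factor s" "y \<in> factor s" "p \<in> words" "q \<in> words"
  shows "(p @ [letter s x, letter s y] @ q, p @ [letter s (x \<otimes> y)] @ q) \<in> rel"
proof -
  have "([letter s x, letter s y], [letter s (x \<otimes> y)]) \<in> amalg_moves A G H"
    using assms by (cases s) (auto simp: amalg_moves_def factor_def)
  then show ?thesis
    using assms amalg_moves_words_word_eval by (intro amalg_move_in_rel)
qed

lemma rel_drop_one:
  assumes "p \<in> words" "q \<in> words"
  shows "(p @ [Inl \<one>] @ q, p @ q) \<in> rel"
proof -
  have move: "([Inl \<one>], []) \<in> amalg_moves A G H"
    by (simp add: amalg_moves_def)
  show ?thesis
    using amalg_move_in_rel[OF move _ _ assms] amalg_moves_words_word_eval[OF move] by simp
qed

lemma rel_swap: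
  assumes "a \<in> KA" "p \<in> words" "q \<in> words"
  shows "(p @ [Inl a] @ q, p @ [letter s a] @ q) \<in> rel"
proof (cases s)
  case True
  then show ?thesis
    using assms A_subset_G equiv_amalg_rel[of G H A] by (auto simp: equiv_def refl_on_def)
next
  case False
  have move: "([Inl a], [Inr a]) \<in> amalg_moves A G H"
    using assms by (simp add: amalg_moves_def)
  show ?thesis
    using amalg_move_in_rel[OF move _ _ assms(2,3)] amalg_moves_words_word_eval[OF move] False by simp
qed

definition inv_word :: "('a + 'a) list \<Rightarrow> ('a + 'a) list" where
  "inv_word w = rev (map (map_sum (m_inv J) (m_inv J)) w)"

lemma inv_word_Cons: "inv_word (l # w) = inv_word w @ [map_sum (m_inv J) (m_inv J) l]"
  by (simp add: inv_word_def)

lemma inv_word_words: "w \<in> words \<Longrightarrow> inv_word w \<in> words"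
proof (induction w)
  case (Cons l w)
  then show ?case
    using subgroup_G subgroup_H by (cases l) (simp_all add: inv_word_Cons subgroup.m_inv_closed)
qed (simp add: inv_word_def)

lemma word_eval_inv_word: "w \<in> words \<Longrightarrow> word_eval J (inv_word w) = inv (word_eval J w)"
proof (induction w)
  case (Cons l w)
  then have l: "case_sum id id l \<in> carrier J" and w: "w \<in> words"
    using Cons_wordsD by auto
  have "case_sum id id (map_sum (m_inv J) (m_inv J) l) = inv (case_sum id id l)"
    by (cases l) simp_all
  then have "word_eval J (inv_word (l # w)) = inv (word_eval J w) \<otimes> inv (case_sum id id l)"
    using Cons w l inv_word_words[OF w] subgroup_G subgroup_H
    by (cases l) (auto simp: inv_word_Cons word_eval_append subgroup.m_inv_closed)
  then show ?case
    using l word_eval_closed[OF w] by (simp add: inv_mult_group)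
qed (simp add: inv_word_def)

lemma generate_subset_word_eval_image: "generate J (KG \<union> KH) \<subseteq> word_eval J ` words"
proof
  fix x assume "x \<in> generate J (KG \<union> KH)"
  then show "x \<in> word_eval J ` words"
  proof (induction rule: generate.induct)
    case one
    show ?case by (rule image_eqI[of _ _ "[]"]) simp_all
  next
    case (incl h)
    then show ?case
      by (auto intro: image_eqI[of _ _ "[Inl h]"] image_eqI[of _ _ "[Inr h]"])
  next
    case (inv h)
    then show ?case
      using subgroup_G subgroup_H
      by (auto intro: image_eqI[of _ _ "[Inl (inv h)]"] image_eqI[of _ _ "[Inr (inv h)]"]
          simp: subgroup.m_inv_closed)
  next
    case (eng h1 h2)
    then obtain w1 w2 where "w1 \<in> words" "w2 \<in> words" "h1 = word_eval J w1" "h2 = word_eval J w2"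
      by blast
    then show ?case
      by (intro image_eqI[of _ _ "w1 @ w2"]) (simp_all add: word_eval_append)
  qed
qed

lemma rel_if_word_eval_eq:
  assumes faithful: "\<And>w. w \<in> words \<Longrightarrow> word_eval J w = \<one> \<Longrightarrow> (w, []) \<in> rel"
    and w: "w1 \<in> words" "w2 \<in> words" and eq: "word_eval J w1 = word_eval J w2"
  shows "(w1, w2) \<in> rel"
proof -
  have w2': "inv_word w2 \<in> words"
    using inv_word_words[OF w(2)] .
  have "(w1 @ inv_word w2, []) \<in> rel"
    using w w2' eq word_eval_closed[OF w(2)]
    by (intro faithful) (simp_all add: word_eval_append word_eval_inv_word)
  from amalg_rel_context[OF this, of "[]" w2]
  have to_w2: "(w1 @ inv_word w2 @ w2, w2) \<in> rel"
    using w by simp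
  have "(inv_word w2 @ w2, []) \<in> rel"
    using w w2' word_eval_closed[OF w(2)]
    by (intro faithful) (simp_all add: word_eval_append word_eval_inv_word)
  from amalg_rel_context[OF this, of w1 "[]"]
  have "(w1 @ inv_word w2 @ w2, w1) \<in> rel"
    using w by simp
  from rel_trans[OF rel_sym[OF this] to_w2] show ?thesis .
qed

lemma rel_Image_eq:
  assumes faithful: "\<And>w. w \<in> words \<Longrightarrow> word_eval J w = \<one> \<Longrightarrow> (w, []) \<in> rel"
    and w: "w \<in> words"
  shows "rel `` {w} = {w' \<in> words. word_eval J w' = word_eval J w}"
proof
  show "rel `` {w} \<subseteq> {w' \<in> words. word_eval J w' = word_eval J w}"
    using word_eval_eq_if_rel amalg_rel_subset[of A G H] by auto
  show "{w' \<in> words. word_eval J w' = word_eval J w} \<subseteq> rel `` {w}"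
    using rel_if_word_eval_eq[OF faithful w] by auto
qed

theorem is_iso_amalg:
  assumes generated: "generate J (KG \<union> KH) = carrier J"
    and faithful: "\<And>w. w \<in> words \<Longrightarrow> word_eval J w = \<one> \<Longrightarrow> (w, []) \<in> rel"
  shows "J \<cong> amalg A G H"
proof -
  define h where "h x = {w \<in> words. word_eval J w = x}" for x
  have rel_class: "rel `` {w} = h (word_eval J w)" if "w \<in> words" for w
    using rel_Image_eq[OF faithful that] by (simp add: h_def)
  have ex: "\<exists>w. w \<in> h x" if "x \<in> carrier J" for x
    using that generate_subset_word_eval_image generated by (auto simp: h_def)
  have h_closed: "h x \<in> carrier (amalg A G H)" if x: "x \<in> carrier J" for x
  proof -
    obtain w where "w \<in> words" "word_eval J w = x"
      using ex[OF x] by (auto simp: h_def)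
    then show ?thesis
      using rel_class quotientI[of w words rel] by (simp add: amalg_def)
  qed
  show ?thesis
  proof (intro is_isoI isoI homI)
    show "h x \<in> carrier (amalg A G H)" if "x \<in> carrier J" for x
      using h_closed[OF that] .
    show "h (x \<otimes> y) = h x \<otimes>\<^bsub>amalg A G H\<^esub> h y" if "x \<in> carrier J" "y \<in> carrier J" for x y
    proof -
      let ?p = "SOME p. p \<in> h x" and ?q = "SOME q. q \<in> h y"
      have "?p \<in> h x" "?q \<in> h y"
        using ex that by (metis someI_ex)+
      then have "rel `` {?p @ ?q} = h (x \<otimes> y)"
        by (simp add: rel_class h_def word_eval_append)
      then show ?thesis
        by (simp add: amalg_def)
    qed
    show "bij_betw h (carrier J) (carrier (amalg A G H))"
    proof (rule bij_betw_imageI)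
      show "inj_on h (carrier J)"
      proof (rule inj_onI)
        fix x y assume "x \<in> carrier J" "h x = h y"
        then obtain w where "w \<in> h x" "w \<in> h y"
          using ex by blast
        then show "x = y" by (simp add: h_def)
      qed
      show "h ` carrier J = carrier (amalg A G H)"
        using h_closed rel_class word_eval_closed by (auto simp: amalg_def elim!: quotientE)
    qed
  qed
qed

end

definition reduced_words :: "'a set \<Rightarrow> 'a set \<Rightarrow> ('a + 'a) list set" where
  "reduced_words TG TH = {w. set w \<subseteq> Inl ` TG \<union> Inr ` TH \<and> successively (\<lambda>l l'. isl l \<noteq> isl l') w}"

lemma reduced_words_Cons:
  "l # w \<in> reduced_words TG TH \<longleftrightarrow>
     l \<in> Inl ` TG \<union> Inr ` TH \<and> w \<in> reduced_words TG TH \<and> (w = [] \<or> isl (hd w) \<noteq> isl l)"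
  by (cases w) (auto simp: reduced_words_def)

lemma reduced_words_snoc:
  "w @ [l] \<in> reduced_words TG TH \<longleftrightarrow>
     w \<in> reduced_words TG TH \<and> l \<in> Inl ` TG \<union> Inr ` TH \<and> (w = [] \<or> isl (last w) \<noteq> isl l)"
  by (auto simp: reduced_words_def successively_append_iff)

(* Representatives need not be unique: only the decomposition y = t a is used. *)
locale amalgam_coset_reps = amalgam_in_group +
  fixes TG TH :: "'a set"
  assumes reps_G: "TG \<subseteq> KG" and reps_H: "TH \<subseteq> KH"
    and cosets_G: "KG - KA \<subseteq> (\<Union>t\<in>TG. t <# KA)"
    and cosets_H: "KH - KA \<subseteq> (\<Union>t\<in>TH. t <# KA)"
begin

definition reps :: "bool \<Rightarrow> 'a set" where
  "reps s = (if s then TG else TH)"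

lemma reps_subset_factor: "reps s \<subseteq> factor s"
  using reps_G reps_H by (simp add: reps_def factor_def)

lemma factor_coset_decomp:
  assumes "y \<in> factor s" "y \<notin> KA"
  obtains t a where "t \<in> reps s" "a \<in> KA" "y = t \<otimes> a"
  using assms cosets_G cosets_H by (cases s) (auto simp: factor_def reps_def l_coset_def)

lemma letter_in_reps: "letter s t \<in> Inl ` TG \<union> Inr ` TH \<longleftrightarrow> t \<in> reps s"
  by (cases s) (auto simp: reps_def)

lemma reduced_words_subset: "reduced_words TG TH \<subseteq> words"
proof
  fix w assume "w \<in> reduced_words TG TH"
  then show "w \<in> words"
    using reps_G reps_H by (induction w) (auto simp: reduced_words_Cons)
qed

lemma reduced_words_snoc_letter:
  "v @ [letter s t] \<in> reduced_words TG TH \<longleftrightarrow>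
     v \<in> reduced_words TG TH \<and> t \<in> reps s \<and> (v = [] \<or> isl (last v) \<noteq> s)"
  by (simp only: reduced_words_snoc letter_in_reps letter_simps)

lemma reduced_words_last_letterE:
  assumes "v \<in> reduced_words TG TH" "v \<noteq> []" "isl (last v) = s"
  obtains v0 t where "v = v0 @ [letter s t]"
proof -
  have "last v \<in> set v"
    using assms(2) by simp
  then have "last v \<in> Inl ` TG \<union> Inr ` TH"
    using assms(1) by (auto simp: reduced_words_def)
  then obtain t where "last v = letter s t"
    using assms(3) by auto
  then show ?thesis
    using that[of "butlast v" t] assms(2) by (metis append_butlast_last_id)
qed

lemma absorb_letter_other_side:
  assumes v: "v \<in> reduced_words TG TH" "v = [] \<or> isl (last v) \<noteq> s" and y: "y \<in> factor s"
  shows "\<exists>v'\<in>reduced_words TG TH. \<exists>a\<in>KA. (v @ [letter s y], v' @ [Inl a]) \<in> rel"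
proof -
  have vw: "v \<in> words"
    using v(1) reduced_words_subset by blast
  show ?thesis
  proof (cases "y \<in> KA")
    case True
    have "(v @ [letter s y], v @ [Inl y]) \<in> rel"
      using rel_sym[OF rel_swap[OF True vw, of "[]" s]] by simp
    then show ?thesis
      using v(1) True by blast
  next
    case False
    then obtain t a where t: "t \<in> reps s" and a: "a \<in> KA" and y_eq: "y = t \<otimes> a"
      using y factor_coset_decomp by blast
    have tw: "t \<in> factor s" and aw: "a \<in> factor s"
      using t a reps_subset_factor A_subset_factor by auto
    have merge: "(v @ [letter s t, letter s a], v @ [letter s y]) \<in> rel"
      using rel_merge[OF tw aw vw, of "[]"] y_eq by simp
    have swap: "(v @ [letter s t, Inl a], v @ [letter s t, letter s a]) \<in> rel"
      using rel_swap[OF a, of "v @ [letter s t]" "[]" s] vw tw by simp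
    have "(v @ [letter s y], (v @ [letter s t]) @ [Inl a]) \<in> rel"
      using rel_trans[OF rel_sym[OF merge] rel_sym[OF swap]] by simp
    moreover have "v @ [letter s t] \<in> reduced_words TG TH"
      using v t by (simp add: reduced_words_snoc_letter)
    ultimately show ?thesis
      using a by blast
  qed
qed

lemma absorb_letter:
  assumes v: "v \<in> reduced_words TG TH" and y: "y \<in> factor s"
  shows "\<exists>v'\<in>reduced_words TG TH. \<exists>a\<in>KA. (v @ [letter s y], v' @ [Inl a]) \<in> rel"
proof (cases "v = [] \<or> isl (last v) \<noteq> s")
  case True
  then show ?thesis
    using absorb_letter_other_side[OF v _ y] by blast
next
  case False
  then obtain v0 t where v_eq: "v = v0 @ [letter s t]"
    using reduced_words_last_letterE[OF v] by blast
  then have v0: "v0 \<in> reduced_words TG TH" "v0 = [] \<or> isl (last v0) \<noteq> s" and t: "t \<in> reps s"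
    using v by (simp_all add: reduced_words_snoc_letter)
  have tw: "t \<in> factor s"
    using t reps_subset_factor by blast
  have "(v @ [letter s y], v0 @ [letter s (t \<otimes> y)]) \<in> rel"
    using rel_merge[OF tw y, of v0 "[]"] v0(1) reduced_words_subset v_eq by auto
  moreover obtain v' a where "v' \<in> reduced_words TG TH" "a \<in> KA"
    "(v0 @ [letter s (t \<otimes> y)], v' @ [Inl a]) \<in> rel"
    using absorb_letter_other_side[OF v0 subgroup.m_closed[OF subgroup_factor tw y]] by blast
  ultimately show ?thesis
    using rel_trans by blast
qed

theorem normal_form:
  assumes "w \<in> words"
  shows "\<exists>v\<in>reduced_words TG TH. \<exists>a\<in>KA. (w, v @ [Inl a]) \<in> rel"
  using assms
proof (induction w rule: rev_induct)
  case Nil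
  have "([], [] @ [Inl \<one>]) \<in> rel"
    using rel_sym[OF rel_drop_one[of "[]" "[]"]] by simp
  then show ?case
    using subgroup.one_closed[OF subgroup_A]
    by (intro bexI[of _ "[]"] bexI[of _ \<one>]) (simp_all add: reduced_words_def)
next
  case (snoc l w)
  define s x where "s = isl l" and "x = case_sum id id l"
  have l_eq: "l = letter s x"
    by (cases l) (simp_all add: s_def x_def)
  have w: "w \<in> words" and x: "x \<in> factor s"
    using snoc.prems by (simp_all add: l_eq)
  obtain v a where v: "v \<in> reduced_words TG TH" and a: "a \<in> KA" and wv: "(w, v @ [Inl a]) \<in> rel"
    using snoc.IH[OF w] by blast
  have vw: "v \<in> words" and aw: "a \<in> factor s"
    using v a reduced_words_subset A_subset_factor by auto
  have "(w @ [l], v @ [Inl a, letter s x]) \<in> rel"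
    using amalg_rel_context[OF wv, of "[]" "[l]"] x l_eq by simp
  also have "(v @ [Inl a, letter s x], v @ [letter s a, letter s x]) \<in> rel"
    using rel_swap[OF a vw, of "[letter s x]" s] x by simp
  also have "(v @ [letter s a, letter s x], v @ [letter s (a \<otimes> x)]) \<in> rel"
    using rel_merge[OF aw x vw, of "[]"] by simp
  finally have "(w @ [l], v @ [letter s (a \<otimes> x)]) \<in> rel" .
  then show ?case
    using absorb_letter[OF v subgroup.m_closed[OF subgroup_factor aw x]] rel_trans by blast
qed

lemma rel_Nil_if_word_eval_eq_one:
  assumes nontrivial: "\<And>v. v \<in> reduced_words TG TH \<Longrightarrow> v \<noteq> [] \<Longrightarrow> word_eval J v \<notin> KA"
    and w: "w \<in> words" "word_eval J w = \<one>"
  shows "(w, []) \<in> rel"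
proof -
  obtain v a where v: "v \<in> reduced_words TG TH" and a: "a \<in> KA" and wv: "(w, v @ [Inl a]) \<in> rel"
    using normal_form[OF w(1)] by blast
  have vw: "v \<in> words" and a_carr: "a \<in> carrier J"
    using v a reduced_words_subset subgroup.mem_carrier[OF subgroup_A] by auto
  have "[Inl a] \<in> words"
    using a A_subset_G by auto
  then have va: "word_eval J v \<otimes> a = \<one>"
    using word_eval_eq_if_rel[OF wv] w(2) vw a_carr by (simp add: word_eval_append)
  then have "word_eval J v = inv a"
    using inv_equality[OF va a_carr word_eval_closed[OF vw]] by simp
  then have "v = []"
    using nontrivial[OF v] subgroup.m_inv_closed[OF subgroup_A a] by auto
  then have "a = \<one>"
    using va a_carr by simp
  then have "(w, [Inl \<one>]) \<in> rel"
    using wv \<open>v = []\<close> by simp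
  also have "([Inl \<one>], []) \<in> rel"
    using rel_drop_one[of "[]" "[]"] by simp
  finally show ?thesis .
qed

theorem is_iso_amalg_if_reduced_words_nontrivial:
  assumes "generate J (KG \<union> KH) = carrier J"
    and "\<And>v. v \<in> reduced_words TG TH \<Longrightarrow> v \<noteq> [] \<Longrightarrow> word_eval J v \<notin> KA"
  shows "J \<cong> amalg A G H"
  using assms by (intro is_iso_amalg rel_Nil_if_word_eval_eq_one)

end

section \<open>SL_2(Z) and the Jacobi group\<close>

lemma mat2_mult [simp]:
  "mat2 a b c d ** mat2 e f g h = mat2 (a*e+b*g) (a*f+b*h) (c*e+d*g) (c*f+d*h)"
  unfolding mat2_def matrix_matrix_mult_def by (simp add: vec_eq_iff forall_2 UNIV_2)

lemma mat2_eq_iff [simp]: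
  "mat2 a b c d = mat2 a' b' c' d' \<longleftrightarrow> a = a' \<and> b = b' \<and> c = c' \<and> d = d'"
  unfolding mat2_def by (auto simp: vec_eq_iff forall_2)

lemma mat2_nth [simp]:
  "mat2 a b c d $ 1 $ 1 = a" "mat2 a b c d $ 1 $ 2 = b" "mat2 a b c d $ 2 $ 1 = c" "mat2 a b c d $ 2 $ 2 = d"
  by (simp_all add: mat2_def)

lemma mat2_cases: obtains a b c d where "M = mat2 a b c d"
proof
  show "M = mat2 (M$1$1) (M$1$2) (M$2$1) (M$2$2)"
    unfolding mat2_def by (simp add: vec_eq_iff forall_2)
qed

lemma mat_1_eq_mat2: "mat 1 = mat2 1 0 0 1"
  unfolding mat2_def mat_def by (simp add: vec_eq_iff forall_2)

lemma det_mat2 [simp]: "det (mat2 a b c d) = a * d - b * c"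
  by (simp add: det_2 mat2_def)

lemma SL2_simps [simp]:
  "carrier SL2 = {M. det M = 1}" "mult SL2 = (\<lambda>M N. M ** N)" "one SL2 = mat 1"
  by (simp_all add: SL2_def)

lemma mat2_adjugate_mult:
  "det (mat2 a b c d) = 1 \<Longrightarrow> mat2 d (- b) (- c) a ** mat2 a b c d = mat 1"
  by (simp add: mat_1_eq_mat2 algebra_simps)

lemma group_SL2: "group SL2"
proof (rule groupI)
  fix M assume "M \<in> carrier SL2"
  moreover obtain a b c d where M: "M = mat2 a b c d" by (rule mat2_cases)
  ultimately show "\<exists>N\<in>carrier SL2. N \<otimes>\<^bsub>SL2\<^esub> M = \<one>\<^bsub>SL2\<^esub>"
    by (intro bexI[of _ "mat2 d (- b) (- c) a"]) (auto simp: mat2_adjugate_mult algebra_simps mat_1_eq_mat2)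
qed (auto simp: det_mul matrix_mul_assoc)

lemma Jacobi_simps [simp]:
  "carrier Jacobi = {P. det (fst P) = 1}"
  "mult Jacobi = (\<lambda>P Q. (fst P ** fst Q, snd P v* fst Q + snd Q))"
  "one Jacobi = (mat 1, 0)"
  by (simp_all add: Jacobi_def)

lemma vector_matrix_mult_uminus: "(- x) v* (A::int^2^2) = - (x v* A)"
  unfolding vector_matrix_mult_def by (simp add: vec_eq_iff sum_negf)

lemma Jacobi_inverse:
  assumes "det M = 1"
  shows "(inv\<^bsub>SL2\<^esub> M, - (x v* inv\<^bsub>SL2\<^esub> M)) \<otimes>\<^bsub>Jacobi\<^esub> (M, x) = \<one>\<^bsub>Jacobi\<^esub>"
  using group.l_inv[OF group_SL2] assms
  by (simp add: vector_matrix_mult_uminus vector_matrix_mul_assoc)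

lemma group_Jacobi: "group Jacobi"
proof (rule groupI)
  fix P assume "P \<in> carrier Jacobi"
  then show "\<exists>Q\<in>carrier Jacobi. Q \<otimes>\<^bsub>Jacobi\<^esub> P = \<one>\<^bsub>Jacobi\<^esub>"
    using Jacobi_inverse[of "fst P" "snd P"] group.inv_closed[OF group_SL2, of "fst P"]
    by (intro bexI[of _ "(inv\<^bsub>SL2\<^esub> (fst P), - (snd P v* inv\<^bsub>SL2\<^esub> (fst P)))"]) auto
qed (auto simp: det_mul matrix_mul_assoc vector_matrix_mul_assoc vector_matrix_left_distrib add.assoc)

lemma Jacobi_inv:
  "P \<in> carrier Jacobi \<Longrightarrow> inv\<^bsub>Jacobi\<^esub> P = (inv\<^bsub>SL2\<^esub> (fst P), - (snd P v* inv\<^bsub>SL2\<^esub> (fst P)))"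
  using Jacobi_inverse[of "fst P" "snd P"] group.inv_closed[OF group_SL2, of "fst P"]
  by (intro group.inv_equality[OF group_Jacobi]) auto

lemma carrier_semi [simp]: "carrier (semi Z) = {P. fst P \<in> Z}"
  by (simp add: semi_def)

lemma subgroup_semi:
  assumes Z: "subgroup Z SL2"
  shows "subgroup {P. fst P \<in> Z} Jacobi"
proof (rule group.subgroupI[OF group_Jacobi])
  have det: "det M = 1" if "M \<in> Z" for M
    using subgroup.subset[OF Z] that by auto
  then show "{P. fst P \<in> Z} \<subseteq> carrier Jacobi" by auto
  show "{P. fst P \<in> Z} \<noteq> {}"
    using subgroup.one_closed[OF Z] by auto
  show "inv\<^bsub>Jacobi\<^esub> P \<in> {P. fst P \<in> Z}" if "P \<in> {P. fst P \<in> Z}" for P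
    using that det subgroup.m_inv_closed[OF Z] by (simp add: Jacobi_inv)
  show "P \<otimes>\<^bsub>Jacobi\<^esub> Q \<in> {P. fst P \<in> Z}" if "P \<in> {P. fst P \<in> Z}" "Q \<in> {P. fst P \<in> Z}" for P Q
    using that subgroup.m_closed[OF Z] by simp
qed

lemma cyc_eq_pows:
  fixes n :: nat
  assumes "det g = 1" "0 < n" "g [^]\<^bsub>SL2\<^esub> n = mat 1"
  shows "cyc g = (\<lambda>k. g [^]\<^bsub>SL2\<^esub> k) ` {..<n}"
  using assms unfolding cyc_def by (simp add: group.generate_singleton_eq_pows[OF group_SL2])

lemma cyc2: "cyc (mat2 (-1) 0 0 (-1)) = {mat2 1 0 0 1, mat2 (-1) 0 0 (-1)}"
  by (subst cyc_eq_pows[where n = 2]) (auto simp: mat_1_eq_mat2 numeral_eq_Suc lessThan_Suc)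

lemma cyc4: "cyc (mat2 0 (-1) 1 0) = {mat2 1 0 0 1, mat2 0 (-1) 1 0, mat2 (-1) 0 0 (-1), mat2 0 1 (-1) 0}"
  by (subst cyc_eq_pows[where n = 4]) (auto simp: mat_1_eq_mat2 numeral_eq_Suc lessThan_Suc)

lemma cyc6: "cyc (mat2 0 1 (-1) 1) = {mat2 1 0 0 1, mat2 0 1 (-1) 1, mat2 (-1) 1 (-1) 0,
    mat2 (-1) 0 0 (-1), mat2 0 (-1) 1 (-1), mat2 1 (-1) 1 0}"
  by (subst cyc_eq_pows[where n = 6]) (auto simp: mat_1_eq_mat2 numeral_eq_Suc lessThan_Suc)

lemma subgroup_cyc: "det g = 1 \<Longrightarrow> subgroup (cyc g) SL2"
  unfolding cyc_def by (simp add: group.generate_is_subgroup[OF group_SL2])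

lemma subgroup_G2: "subgroup (carrier G2) Jacobi"
  and subgroup_G4: "subgroup (carrier G4) Jacobi"
  and subgroup_G6: "subgroup (carrier G6) Jacobi"
  unfolding G2_def G4_def G6_def by (simp_all add: subgroup_semi subgroup_cyc)

lemma G2_eq: "G2 = Jacobi\<lparr>carrier := carrier G2\<rparr>"
  and G4_eq: "G4 = Jacobi\<lparr>carrier := carrier G4\<rparr>"
  and G6_eq: "G6 = Jacobi\<lparr>carrier := carrier G6\<rparr>"
  by (simp_all add: G2_def G4_def G6_def semi_def)

lemma carrier_G2: "carrier G2 = {P. fst P \<in> {mat2 1 0 0 1, mat2 (-1) 0 0 (-1)}}"
  by (simp add: G2_def cyc2)

lemma carrier_G4:
  "carrier G4 = {P. fst P \<in> {mat2 1 0 0 1, mat2 0 (-1) 1 0, mat2 (-1) 0 0 (-1), mat2 0 1 (-1) 0}}"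
  by (simp add: G4_def cyc4)

lemma carrier_G6:
  "carrier G6 = {P. fst P \<in> {mat2 1 0 0 1, mat2 0 1 (-1) 1, mat2 (-1) 1 (-1) 0,
     mat2 (-1) 0 0 (-1), mat2 0 (-1) 1 (-1), mat2 1 (-1) 1 0}}"
  by (simp add: G6_def cyc6)

lemma G2_subset_G4: "carrier G2 \<subseteq> carrier G4"
  and G2_subset_G6: "carrier G2 \<subseteq> carrier G6"
  by (auto simp: carrier_G2 carrier_G4 carrier_G6)

section \<open>The Jacobi group as an amalgam of G4 and G6 over G2\<close>

abbreviation "reps_G4 \<equiv> {(mat2 0 (-1) 1 0, 0 :: int^2)}"
abbreviation "reps_G6 \<equiv> {(mat2 0 1 (-1) 1, 0 :: int^2), (mat2 (-1) 1 (-1) 0, 0)}"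

lemma Jacobi_l_cosetI: "(N, x) \<in> K \<Longrightarrow> (T ** N, x) \<in> (T, 0) <#\<^bsub>Jacobi\<^esub> K"
  by (force simp: l_coset_def)

lemma G4_cosets:
  "carrier G4 - carrier G2 \<subseteq> (\<Union>t\<in>reps_G4. t <#\<^bsub>Jacobi\<^esub> carrier G2)"
proof clarify
  fix M x assume "(M, x) \<in> carrier G4" "(M, x) \<notin> carrier G2"
  then have "M = mat2 0 (-1) 1 0 \<or> M = mat2 0 1 (-1) 0"
    by (auto simp: carrier_G2 carrier_G4)
  then show "(M, x) \<in> (\<Union>t\<in>reps_G4. t <#\<^bsub>Jacobi\<^esub> carrier G2)"
    using Jacobi_l_cosetI[of "mat2 1 0 0 1" x "carrier G2" "mat2 0 (-1) 1 0"]
      Jacobi_l_cosetI[of "mat2 (-1) 0 0 (-1)" x "carrier G2" "mat2 0 (-1) 1 0"]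
    by (auto simp: carrier_G2)
qed

lemma G6_cosets:
  "carrier G6 - carrier G2 \<subseteq> (\<Union>t\<in>reps_G6. t <#\<^bsub>Jacobi\<^esub> carrier G2)"
proof clarify
  fix M x assume "(M, x) \<in> carrier G6" "(M, x) \<notin> carrier G2"
  then have "M = mat2 0 1 (-1) 1 \<or> M = mat2 (-1) 1 (-1) 0 \<or>
      M = mat2 0 (-1) 1 (-1) \<or> M = mat2 1 (-1) 1 0"
    by (auto simp: carrier_G2 carrier_G6)
  then show "(M, x) \<in> (\<Union>t\<in>reps_G6. t <#\<^bsub>Jacobi\<^esub> carrier G2)"
    using Jacobi_l_cosetI[of "mat2 1 0 0 1" x "carrier G2" "mat2 0 1 (-1) 1"]
      Jacobi_l_cosetI[of "mat2 (-1) 0 0 (-1)" x "carrier G2" "mat2 0 1 (-1) 1"]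
      Jacobi_l_cosetI[of "mat2 1 0 0 1" x "carrier G2" "mat2 (-1) 1 (-1) 0"]
      Jacobi_l_cosetI[of "mat2 (-1) 0 0 (-1)" x "carrier G2" "mat2 (-1) 1 (-1) 0"]
    by (auto simp: carrier_G2)
qed

lemma Jacobi_amalgam_coset_reps:
  "amalgam_coset_reps Jacobi (carrier G2) (carrier G4) (carrier G6) reps_G4 reps_G6"
proof (intro amalgam_coset_reps.intro amalgam_in_group.intro amalgam_coset_reps_axioms.intro
    amalgam_in_group_axioms.intro group_Jacobi subgroup_G2 subgroup_G4 subgroup_G6
    G2_subset_G4 G2_subset_G6 G4_cosets G6_cosets)
qed (auto simp: carrier_G4 carrier_G6)

definition sign_cone :: "(int^2^2) set" where
  "sign_cone = {M. 0 < M$1$1 \<and> 0 < M$2$2 \<and> M$1$2 \<le> 0 \<and> M$2$1 \<le> 0 \<and> M$1$2 + M$2$1 < 0}"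

lemma mat2_in_sign_cone [simp]:
  "mat2 a b c d \<in> sign_cone \<longleftrightarrow> 0 < a \<and> 0 < d \<and> b \<le> 0 \<and> c \<le> 0 \<and> b + c < 0"
  by (simp add: sign_cone_def)

lemma sign_cone_mult:
  assumes "M \<in> sign_cone" "N \<in> sign_cone"
  shows "M ** N \<in> sign_cone"
proof -
  obtain a b c d where M: "M = mat2 a b c d" by (rule mat2_cases)
  obtain e f g h where N: "N = mat2 e f g h" by (rule mat2_cases)
  have signs: "0 < a" "0 < d" "b \<le> 0" "c \<le> 0" "b + c < 0"
      "0 < e" "0 < h" "f \<le> 0" "g \<le> 0" "f + g < 0"
    using assms by (simp_all add: M N)
  have "0 < a * e" "0 \<le> b * g" "0 < d * h" "0 \<le> c * f"
    using signs by (simp_all add: mult_nonpos_nonpos)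
  moreover have "a * f \<le> 0" "b * h \<le> 0" "c * e \<le> 0" "d * g \<le> 0"
    using signs by (simp_all add: mult_nonneg_nonpos mult_nonpos_nonneg)
  moreover have "a * f + d * g < 0"
  proof (cases "f < 0")
    case True
    then have "a * f < 0" using signs by (simp add: mult_pos_neg)
    then show ?thesis using \<open>d * g \<le> 0\<close> by linarith
  next
    case False
    then have "g < 0" using signs by linarith
    then have "d * g < 0" using signs by (simp add: mult_pos_neg)
    then show ?thesis using \<open>a * f \<le> 0\<close> by linarith
  qed
  ultimately show ?thesis
    by (simp add: M N)
qed

lemma matrix_of_reduced_word_starting_with_S:
  assumes "v \<in> reduced_words reps_G4 reps_G6" "v \<noteq> []" "hd v = Inl (mat2 0 (-1) 1 0, 0)"
  shows "fst (word_eval Jacobi v) \<in>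
    insert (mat2 0 (-1) 1 0) (sign_cone \<union> (\<lambda>P. P ** mat2 0 (-1) 1 0) ` sign_cone)"
  using assms
proof (induction v rule: induct_list012)
  case (3 x y zs)
  obtain U where y: "y = Inr (U, 0)" and U: "U = mat2 0 1 (-1) 1 \<or> U = mat2 (-1) 1 (-1) 0"
    using "3.prems" by (auto simp: reduced_words_Cons)
  have zs: "zs \<in> reduced_words reps_G4 reps_G6" "zs = [] \<or> hd zs = Inl (mat2 0 (-1) 1 0, 0)"
    using "3.prems" y by (cases zs; auto simp: reduced_words_Cons)+
  have SU: "mat2 0 (-1) 1 0 ** U \<in> sign_cone"
    using U by auto
  have eval: "fst (word_eval Jacobi (x # y # zs)) = (mat2 0 (-1) 1 0 ** U) ** fst (word_eval Jacobi zs)"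
    using "3.prems" y by (simp add: matrix_mul_assoc)
  show ?case
  proof (cases "zs = []")
    case True
    then show ?thesis using eval SU by simp
  next
    case False
    then show ?thesis
      using "3.IH"(1) zs eval SU sign_cone_mult
      by (auto simp: matrix_mul_assoc mat_1_eq_mat2)
  qed
qed simp_all

lemma pingpong_not_pm_one:
  assumes "M \<in> insert (mat2 0 (-1) 1 0) (sign_cone \<union> (\<lambda>P. P ** mat2 0 (-1) 1 0) ` sign_cone)"
    and "N \<in> {mat 1, mat2 0 1 (-1) 1, mat2 (-1) 1 (-1) 0}"
  shows "N ** M \<notin> {mat2 1 0 0 1, mat2 (-1) 0 0 (-1)}"
proof -
  have N: "N \<in> {mat2 1 0 0 1, mat2 0 1 (-1) 1, mat2 (-1) 1 (-1) 0}"
    using assms(2) by (simp add: mat_1_eq_mat2)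
  from assms(1) consider "M = mat2 0 (-1) 1 0"
    | P where "P \<in> sign_cone" "M = P \<or> M = P ** mat2 0 (-1) 1 0"
    by auto
  then show ?thesis
  proof cases
    case (2 P)
    moreover obtain a b c d where "P = mat2 a b c d" by (rule mat2_cases)
    ultimately show ?thesis using N by auto
  qed (use N in auto)
qed

lemma word_eval_reduced_word_notin_G2:
  assumes v: "v \<in> reduced_words reps_G4 reps_G6" "v \<noteq> []"
  shows "word_eval Jacobi v \<notin> carrier G2"
proof -
  obtain l v' where v_eq: "v = l # v'"
    using v(2) by (cases v) auto
  have "fst (word_eval Jacobi v) \<notin> {mat2 1 0 0 1, mat2 (-1) 0 0 (-1)}"
  proof (cases "l = Inl (mat2 0 (-1) 1 0, 0)")
    case True
    then show ?thesis
      using pingpong_not_pm_one[OF matrix_of_reduced_word_starting_with_S[OF v], of "mat 1"] v_eq by simp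
  next
    case False
    then obtain U where l: "l = Inr (U, 0)" and U: "U \<in> {mat2 0 1 (-1) 1, mat2 (-1) 1 (-1) 0}"
      using v v_eq by (auto simp: reduced_words_Cons)
    have v': "v' \<in> reduced_words reps_G4 reps_G6" "v' = [] \<or> hd v' = Inl (mat2 0 (-1) 1 0, 0)"
      using v v_eq l by (cases v'; auto simp: reduced_words_Cons)+
    show ?thesis
    proof (cases "v' = []")
      case True
      then show ?thesis using U v_eq l by auto
    next
      case False
      then show ?thesis
        using pingpong_not_pm_one[OF matrix_of_reduced_word_starting_with_S[OF v'(1) False], of U] v' U v_eq l
        by simp
    qed
  qed
  then show ?thesis
    by (simp add: carrier_G2)
qed

lemma shear_in_generate: "(mat2 1 n 0 1, 0) \<in> generate Jacobi (carrier G4 \<union> carrier G6)"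
proof -
  let ?\<Gamma> = "generate Jacobi (carrier G4 \<union> carrier G6)"
  have gen: "P \<in> ?\<Gamma>" if "P \<in> carrier G4 \<or> P \<in> carrier G6" for P
    using that by (auto intro: generate.incl)
  have "(mat2 1 (-1) 1 0, 0) \<otimes>\<^bsub>Jacobi\<^esub> (mat2 0 1 (-1) 0, 0) \<in> ?\<Gamma>"
    by (intro generate.eng gen) (simp_all add: carrier_G4 carrier_G6)
  then have T: "(mat2 1 1 0 1, 0) \<in> ?\<Gamma>" by simp
  have "(mat2 0 (-1) 1 0, 0) \<otimes>\<^bsub>Jacobi\<^esub> (mat2 0 1 (-1) 1, 0) \<in> ?\<Gamma>"
    by (intro generate.eng gen) (simp_all add: carrier_G4 carrier_G6)
  then have T_inv: "(mat2 1 (-1) 0 1, 0) \<in> ?\<Gamma>" by simp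
  show ?thesis
  proof (induction n rule: int_induct[where k = 0])
    case base
    show ?case
      using generate.one[of Jacobi] by (simp add: mat_1_eq_mat2)
  next
    case (step1 i)
    from generate.eng[OF step1(2) T] show ?case by (simp add: add.commute)
  next
    case (step2 i)
    from generate.eng[OF step2(2) T_inv] show ?case by simp
  qed
qed

lemma upper_triangular_in_generate:
  assumes "a * d = 1"
  shows "(mat2 a b 0 d, 0) \<in> generate Jacobi (carrier G4 \<union> carrier G6)"
proof -
  from assms have "a = 1 \<and> d = 1 \<or> a = -1 \<and> d = -1"
    by (simp add: zmult_eq_1_iff)
  then show ?thesis
  proof
    assume "a = 1 \<and> d = 1"
    then show ?thesis using shear_in_generate by simp
  next
    assume ad: "a = -1 \<and> d = -1"
    have "(mat2 (-1) 0 0 (-1), 0) \<in> generate Jacobi (carrier G4 \<union> carrier G6)"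
      by (rule generate.incl) (simp add: carrier_G4)
    from generate.eng[OF this shear_in_generate[of "- b"]] show ?thesis
      using ad by simp
  qed
qed

lemma SL2_in_generate:
  "det M = 1 \<Longrightarrow> (M, 0) \<in> generate Jacobi (carrier G4 \<union> carrier G6)"
proof (induction "nat \<bar>M$2$1\<bar>" arbitrary: M rule: less_induct)
  case less
  let ?\<Gamma> = "generate Jacobi (carrier G4 \<union> carrier G6)"
  obtain a b c d where M: "M = mat2 a b c d" by (rule mat2_cases)
  have det: "a * d - b * c = 1" using less.prems M by simp
  show ?case
  proof (cases "c = 0")
    case True
    then show ?thesis
      using upper_triangular_in_generate[of a d b] det M by simp
  next
    case False
    (* one step of Euclid's algorithm on the first column: M = ((1,k),(0,1)) ((0,1),(-1,0)) M' *)
    define k where "k = a div c"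
    define M' where "M' = mat2 (- c) (- d) (a - k * c) (b - k * d)"
    have "a - k * c = a mod c"
      unfolding k_def by (metis minus_mult_div_eq_mod mult.commute)
    moreover have "\<bar>a mod c\<bar> < \<bar>c\<bar>"
      using False by (rule abs_mod_less)
    ultimately have "nat \<bar>M'$2$1\<bar> < nat \<bar>M$2$1\<bar>"
      by (simp add: M M'_def)
    moreover have "det M' = 1"
      using det by (simp add: M'_def algebra_simps)
    ultimately have M': "(M', 0) \<in> ?\<Gamma>"
      by (rule less.hyps)
    have "(mat2 0 1 (-1) 0, 0) \<in> ?\<Gamma>"
      by (rule generate.incl) (simp add: carrier_G4)
    from generate.eng[OF shear_in_generate[of k] generate.eng[OF this M']]
    show ?thesis
      by (simp add: M M'_def algebra_simps)
  qed
qed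

lemma generate_G4_G6: "generate Jacobi (carrier G4 \<union> carrier G6) = carrier Jacobi"
proof
  show "generate Jacobi (carrier G4 \<union> carrier G6) \<subseteq> carrier Jacobi"
    using subgroup.subset[OF subgroup_G4] subgroup.subset[OF subgroup_G6]
    by (intro group.generate_incl[OF group_Jacobi]) simp
  show "carrier Jacobi \<subseteq> generate Jacobi (carrier G4 \<union> carrier G6)"
  proof
    fix P assume "P \<in> carrier Jacobi"
    then have "(fst P, 0) \<in> generate Jacobi (carrier G4 \<union> carrier G6)"
      by (simp add: SL2_in_generate)
    moreover have "(mat 1, snd P) \<in> generate Jacobi (carrier G4 \<union> carrier G6)"
      by (rule generate.incl) (simp add: carrier_G4 mat_1_eq_mat2)
    ultimately show "P \<in> generate Jacobi (carrier G4 \<union> carrier G6)"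
      using generate.eng by fastforce
  qed
qed

theorem lemma6:
  shows "carrier G2 \<subseteq> carrier G4 \<and> carrier G2 \<subseteq> carrier G6 \<and>
         subgroup (carrier G2) G4 \<and> subgroup (carrier G2) G6 \<and>
         Jacobi \<cong> amalg G2 G4 G6"
proof -
  interpret amalgam_coset_reps Jacobi "carrier G2" "carrier G4" "carrier G6" reps_G4 reps_G6
    by (rule Jacobi_amalgam_coset_reps)
  have "subgroup (carrier G2) G4" "subgroup (carrier G2) G6"
    using subgroup_incl[OF subgroup_G2 subgroup_G4 G2_subset_G4]
      subgroup_incl[OF subgroup_G2 subgroup_G6 G2_subset_G6]
    by (simp_all flip: G4_eq G6_eq)
  moreover have "Jacobi \<cong> amalg G2 G4 G6"
    using is_iso_amalg_if_reduced_words_nontrivial[OF generate_G4_G6 word_eval_reduced_word_notin_G2]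
    by (simp flip: G2_eq G4_eq G6_eq)
  ultimately show ?thesis
    using G2_subset_G4 G2_subset_G6 by blast
qed

end
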